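(* For every integer $r\ge 2$, the rightmost point of $P_r$ lies above the line $\ell_{r-1}$, and the leftmost point of $P_r$ lies below the line $\ell_{r-1}'$.
   Context: Define finite sets $P_r\subset\mathbb{Z}^2$ for integers $r\ge 0$ recursively: $P_0:=\{(0,0)\}$; for $r\ge 1$, $L_r:=P_{r-1}$, $R_r:=\{(x+\delta_r,\,y+\delta_r'):(x,y)\in L_r\}$ and $P_r:=L_r\cup R_r$, where $\delta_r:=3\cdot 4^{r-1}$ and $\delta_r':=(3r+1)\cdot 4^{r-1}$. For $r\ge 1$, let $\ell_r$ be the straight line through the rightmost point (largest $x$-coordinate) of $L_r$ and the leftmost point (smallest $x$-coordinate) of $R_r$. For $r\ge 2$, $R_r$ is the translate of $P_{r-1}=L_{r-1}\cup R_{r-1}$ by the vector $(\delta_r,\delta_r')$; let $\ell_{r-1}'$ denote the translate of the line $\ell_{r-1}$ by $(\delta_r,\delta_r')$. *)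

theory Defs
  imports Complex_Main
begin

type_synonym pt = "int \<times> int"

definition delta :: "nat \<Rightarrow> int" where
  "delta r = 3 * 4 ^ (r - 1)"

definition delta' :: "nat \<Rightarrow> int" where
  "delta' r = (3 * int r + 1) * 4 ^ (r - 1)"

definition translate :: "int \<Rightarrow> int \<Rightarrow> pt \<Rightarrow> pt" where
  "translate a b p = (fst p + a, snd p + b)"

fun P :: "nat \<Rightarrow> pt set" where
  "P 0 = {(0, 0)}"
| "P (Suc n) = P n \<union> translate (delta (Suc n)) (delta' (Suc n)) ` P n"

definition L :: "nat \<Rightarrow> pt set" where
  "L r = P (r - 1)"

definition R :: "nat \<Rightarrow> pt set" where
  "R r = translate (delta r) (delta' r) ` L r"

definition rightmost :: "pt set \<Rightarrow> pt" where
  "rightmost S = (THE p. p \<in> S \<and> (\<forall>q\<in>S. q \<noteq> p \<longrightarrow> fst q < fst p))"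

definition leftmost :: "pt set \<Rightarrow> pt" where
  "leftmost S = (THE p. p \<in> S \<and> (\<forall>q\<in>S. q \<noteq> p \<longrightarrow> fst q > fst p))"

(* line ell_r, given by the two points it passes through *)
definition ell :: "nat \<Rightarrow> pt \<times> pt" where
  "ell r = (rightmost (L r), leftmost (R r))"

(* ell'_{r-1}: translate of ell_{r-1} by (delta r, delta' r) *)
definition ell' :: "nat \<Rightarrow> pt \<times> pt" where
  "ell' r = (translate (delta r) (delta' r) (fst (ell (r - 1))),
             translate (delta r) (delta' r) (snd (ell (r - 1))))"

(* value at abscissa x of the non-vertical line through a and b *)
definition line_val :: "pt \<times> pt \<Rightarrow> real \<Rightarrow> real" where
  "line_val l x = (let a = fst l; b = snd l in
     real_of_int (snd a) + real_of_int (snd b - snd a) * (x - real_of_int (fst a))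
       / real_of_int (fst b - fst a))"

definition above :: "pt \<Rightarrow> pt \<times> pt \<Rightarrow> bool" where
  "above p l \<longleftrightarrow> real_of_int (snd p) > line_val l (real_of_int (fst p))"

definition below :: "pt \<Rightarrow> pt \<times> pt \<Rightarrow> bool" where
  "below p l \<longleftrightarrow> real_of_int (snd p) < line_val l (real_of_int (fst p))"

end

theory Submission
  imports Defs
begin

text \<open>By induction, \<open>P n\<close> has the unique leftmost point \<open>(0, 0)\<close> and the unique
rightmost point \<open>(4^n - 1, n 4^n)\<close>: the translate \<open>R\<close> lies strictly to the right of \<open>L\<close>,
and the translation maps the rightmost point of \<open>P n\<close> to that of \<open>P (n+1)\<close>.
This determines all points entering the two lines. Comparing cross products, with
\<open>k = r - 2\<close> and \<open>t = 4^k\<close>, both claims then say that \<open>4 t^2 + (15 k + 32) t > 0\<close>.\<close>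

lemma rightmost_eqI:
  assumes "p \<in> S" and "\<And>q. q \<in> S \<Longrightarrow> q \<noteq> p \<Longrightarrow> fst q < fst p"
  shows "rightmost S = p"
  unfolding rightmost_def by (rule the_equality) (use assms in \<open>auto, force\<close>)

lemma leftmost_eqI:
  assumes "p \<in> S" and "\<And>q. q \<in> S \<Longrightarrow> q \<noteq> p \<Longrightarrow> fst p < fst q"
  shows "leftmost S = p"
  unfolding leftmost_def by (rule the_equality) (use assms in \<open>auto, force\<close>)

lemma leftmost_translate_image:
  assumes "p \<in> S" and "\<And>q. q \<in> S \<Longrightarrow> q \<noteq> p \<Longrightarrow> fst p < fst q"
  shows "leftmost (translate a b ` S) = translate a b p"
proof (rule leftmost_eqI)
  show "translate a b p \<in> translate a b ` S" using assms(1) by simp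
  fix q assume "q \<in> translate a b ` S" "q \<noteq> translate a b p"
  then obtain q' where "q' \<in> S" "q' \<noteq> p" "q = translate a b q'" by blast
  then show "fst (translate a b p) < fst q" using assms(2) by (simp add: translate_def)
qed

lemma above_iff_cross:
  assumes "fst a < fst b"
  shows "above p (a, b) \<longleftrightarrow>
    (snd b - snd a) * (fst p - fst a) < (snd p - snd a) * (fst b - fst a)"
proof -
  have d: "real_of_int (fst b - fst a) > 0" using assms by simp
  have "above p (a, b) \<longleftrightarrow>
      real_of_int ((snd b - snd a) * (fst p - fst a)) / real_of_int (fst b - fst a)
        < real_of_int (snd p - snd a)"
    unfolding above_def line_val_def Let_def by auto
  also have "\<dots> \<longleftrightarrow> (snd b - snd a) * (fst p - fst a) < (snd p - snd a) * (fst b - fst a)"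
    by (simp only: pos_divide_less_eq[OF d] of_int_less_iff flip: of_int_mult)
  finally show ?thesis .
qed

lemma below_iff_cross:
  assumes "fst a < fst b"
  shows "below p (a, b) \<longleftrightarrow>
    (snd p - snd a) * (fst b - fst a) < (snd b - snd a) * (fst p - fst a)"
proof -
  have d: "real_of_int (fst b - fst a) > 0" using assms by simp
  have "below p (a, b) \<longleftrightarrow>
      real_of_int (snd p - snd a)
        < real_of_int ((snd b - snd a) * (fst p - fst a)) / real_of_int (fst b - fst a)"
    unfolding below_def line_val_def Let_def by auto
  also have "\<dots> \<longleftrightarrow> (snd p - snd a) * (fst b - fst a) < (snd b - snd a) * (fst p - fst a)"
    by (simp only: pos_less_divide_eq[OF d] of_int_less_iff flip: of_int_mult)
  finally show ?thesis .
qed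

lemma delta_Suc: "delta (Suc n) = 3 * 4 ^ n"
  by (simp add: delta_def)

lemma delta'_Suc: "delta' (Suc n) = (3 * int n + 4) * 4 ^ n"
  by (simp add: delta'_def algebra_simps)

lemma translate_corner:
  "translate (delta (Suc n)) (delta' (Suc n)) (4 ^ n - 1, int n * 4 ^ n)
     = (4 ^ Suc n - 1, int (Suc n) * 4 ^ Suc n)"
  by (simp add: translate_def delta_Suc delta'_Suc algebra_simps)

lemma origin_mem_P: "(0, 0) \<in> P n"
  by (induction n) auto

lemma corner_mem_P: "(4 ^ n - 1, int n * 4 ^ n) \<in> P n"
proof (induction n)
  case (Suc n)
  then show ?case by (simp only: P.simps flip: translate_corner) blast
qed simp

lemma P_strict_extremes:
  assumes "q \<in> P n"
  shows "(q = (0, 0) \<or> 0 < fst q) \<and> (q = (4 ^ n - 1, int n * 4 ^ n) \<or> fst q < 4 ^ n - 1)"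
  using assms
proof (induction n arbitrary: q)
  case (Suc n)
  have pos: "(0::int) < 4 ^ n" by simp
  from Suc.prems consider "q \<in> P n"
    | q' where "q' \<in> P n" "q = translate (delta (Suc n)) (delta' (Suc n)) q'"
    by auto
  then show ?case
  proof cases
    case 1
    with Suc.IH have "q = (0, 0) \<or> 0 < fst q" "q = (4 ^ n - 1, int n * 4 ^ n) \<or> fst q < 4 ^ n - 1"
      by blast+
    moreover from this(2) have "fst q \<le> 4 ^ n - 1" by auto
    then have "fst q < 4 ^ Suc n - 1" using pos by (simp only: power_Suc)
    ultimately show ?thesis by blast
  next
    case 2
    then have IH: "0 \<le> fst q'" "q' = (4 ^ n - 1, int n * 4 ^ n) \<or> fst q' < 4 ^ n - 1"
      using Suc.IH[of q'] by auto
    have fst_q: "fst q = fst q' + 3 * 4 ^ n"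
      using 2 by (simp add: translate_def delta_Suc)
    from IH(2) have "q = (4 ^ Suc n - 1, int (Suc n) * 4 ^ Suc n) \<or> fst q < 4 ^ Suc n - 1"
    proof
      assume "q' = (4 ^ n - 1, int n * 4 ^ n)"
      then show ?thesis using 2 translate_corner by simp
    next
      assume "fst q' < 4 ^ n - 1"
      then show ?thesis using fst_q by simp
    qed
    moreover have "0 < fst q" using IH(1) fst_q pos by linarith
    ultimately show ?thesis by simp
  qed
qed simp

lemma rightmost_P: "rightmost (P n) = (4 ^ n - 1, int n * 4 ^ n)"
  by (rule rightmost_eqI[OF corner_mem_P]) (metis P_strict_extremes fst_conv)

lemma leftmost_P: "leftmost (P n) = (0, 0)"
  by (rule leftmost_eqI[OF origin_mem_P]) (metis P_strict_extremes fst_conv)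

lemma leftmost_R: "leftmost (R r) = (delta r, delta' r)"
proof -
  have "leftmost (R r) = translate (delta r) (delta' r) (0, 0)"
    unfolding R_def L_def
    by (rule leftmost_translate_image[OF origin_mem_P]) (metis P_strict_extremes fst_conv)
  then show ?thesis by (simp add: translate_def)
qed

theorem lemma2:
  fixes r :: nat
  assumes "r \<ge> 2"
  shows "above (rightmost (P r)) (ell (r - 1)) \<and> below (leftmost (P r)) (ell' r)"
proof -
  obtain k where r: "r = Suc (Suc k)" using assms by (metis add_2_eq_Suc le_Suc_ex)
  define t :: int where "t = 4 ^ k"
  have "t > 0" by (simp add: t_def)
  then have key: "0 < 4 * t\<^sup>2 + (15 * int k + 32) * t" by (simp add: add_pos_nonneg)
  have ell: "ell (r - 1) = ((t - 1, int k * t), (3 * t, (3 * int k + 4) * t))"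
    by (simp add: r ell_def L_def rightmost_P leftmost_R delta_Suc delta'_Suc t_def)
  have ell': "ell' r = ((13 * t - 1, (13 * int k + 28) * t), (15 * t, (15 * int k + 32) * t))"
    by (simp add: ell'_def ell[unfolded r diff_Suc_1] r translate_def delta_def delta'_def t_def algebra_simps)
  have right: "rightmost (P r) = (16 * t - 1, (int k + 2) * (16 * t))"
    unfolding rightmost_P by (simp add: r t_def algebra_simps)
  have "above (rightmost (P r)) (ell (r - 1))"
    unfolding right ell using key \<open>t > 0\<close>
    by (simp add: above_iff_cross algebra_simps power2_eq_square)
  moreover have "below (leftmost (P r)) (ell' r)"
    unfolding leftmost_P ell' using key \<open>t > 0\<close>
    by (simp add: below_iff_cross algebra_simps power2_eq_square)
  ultimately show ?thesis ..
qed

end
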